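(* For any $k\ge 2$ groups of agents with arbitrary monotonic utilities, there exists an allocation that is $1/k$-democratic EF2.
   Context: There is a finite set $G$ of goods and $k$ groups $A_1,\dots,A_k$ with $n_i\ge1$ agents in $A_i$. Each agent has a utility $u_a:2^G\to\mathbb{R}_{\ge0}$ that is monotone ($X\subseteq Y\Rightarrow u_a(X)\le u_a(Y)$). An allocation is a partition $(G_1,\dots,G_k)$ of $G$; agents of $A_i$ get $u_a(G_i)$. It is EF2 for $a\in A_i$ if for every $i'$ there is $C\subseteq G_{i'}$ with $|C|\le 2$ and $u_a(G_i)\ge u_a(G_{i'}\setminus C)$. An allocation is $1/k$-democratic EF2 if for each $i$ at least $n_i/k$ agents of $A_i$ find it EF2. *)

theory Defs
  imports Complex_Main
begin

text \<open>Groups are indexed by i < k; agent j of group i (j < n i) has utility u i j.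
  An allocation is a partition (P 0, ..., P (k-1)) of the set of goods G (parts may be empty).\<close>

definition is_allocation :: "'g set \<Rightarrow> nat \<Rightarrow> (nat \<Rightarrow> 'g set) \<Rightarrow> bool" where
  "is_allocation G k P \<longleftrightarrow>
     (\<forall>i<k. \<forall>i'<k. i \<noteq> i' \<longrightarrow> P i \<inter> P i' = {}) \<and> (\<Union>i<k. P i) = G"

definition EF2 :: "('g set \<Rightarrow> real) \<Rightarrow> nat \<Rightarrow> (nat \<Rightarrow> 'g set) \<Rightarrow> nat \<Rightarrow> bool" where
  "EF2 v k P i \<longleftrightarrow>
     (\<forall>i'<k. \<exists>C. C \<subseteq> P i' \<and> card C \<le> 2 \<and> v (P i' - C) \<le> v (P i))"

definition democratic_EF2 ::
    "nat \<Rightarrow> (nat \<Rightarrow> nat) \<Rightarrow> (nat \<Rightarrow> nat \<Rightarrow> 'g set \<Rightarrow> real) \<Rightarrow> (nat \<Rightarrow> 'g set) \<Rightarrow> bool" where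
  "democratic_EF2 k n u P \<longleftrightarrow>
     (\<forall>i<k. real (card {j. j < n i \<and> EF2 (u i j) k P i}) \<ge> real (n i) / real k)"

end

theory Submission
  imports Defs "HOL-Analysis.Brouwer_Fixpoint"
begin

text \<open>Number the goods \<open>0, \<dots>, N - 1\<close> and let good \<open>t\<close> occupy the segment \<open>[2t, 2t + 2]\<close> of
  \<open>[0, 2N]\<close>. A grid point \<open>x \<in> {0..2N}\<^sup>k\<^sup>-\<^sup>1\<close> determines \<open>k - 1\<close> cuts (the running maxima of
  its coordinates) and hence \<open>k\<close> consecutive pieces, a piece consisting of the goods lying entirely
  between two consecutive cuts. The point is handed to group \<open>(\<Sum>i x\<^sub>i) mod k\<close>, and is labelled by a
  nonempty piece that at least a \<open>1/k\<close> fraction of that group likes best among all pieces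
  (pigeonhole). This labelling satisfies Sperner's boundary condition, so Kuhn's combinatorial
  lemma yields an elementary simplex carrying all \<open>k\<close> labels. Its vertices have consecutive
  coordinate sums, so they belong to \<open>k\<close> different groups, and each group receives the block of
  goods that carries its vertex's label in the cut pattern of the base vertex. As the vertices
  differ from the base vertex by at most one in each coordinate, every block differs from the
  corresponding piece of any vertex by at most the two goods straddling its end points; this
  gives EF2 for the supporters of each label.\<close>

lemma exists_large_fibre:
  fixes f :: "nat \<Rightarrow> 'a"
  assumes "finite J" "J \<noteq> {}" "card J \<le> k" "f ` {..<M} \<subseteq> J"
  shows "\<exists>j\<in>J. real M / real k \<le> real (card {a. a < M \<and> f a = j})"
proof (rule ccontr)
  assume small: "\<not> ?thesis"
  have "0 < card J" using assms(1,2) by (simp add: card_gt_0_iff)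
  then have "k > 0" using assms(3) by linarith
  have "M = card (\<Union>j\<in>J. {a. a < M \<and> f a = j})"
    using assms(4) by (subst card_lessThan[symmetric]) (rule arg_cong[of _ _ card], auto)
  also have "\<dots> = (\<Sum>j\<in>J. card {a. a < M \<and> f a = j})"
    by (rule card_UN_disjoint) (use assms in auto)
  finally have "real M = (\<Sum>j\<in>J. real (card {a. a < M \<and> f a = j}))"
    by (metis of_nat_sum)
  also have "\<dots> < (\<Sum>j\<in>J. real M / real k)"
    by (rule sum_strict_mono) (use assms small in auto)
  also have "\<dots> = real (card J) * (real M / real k)" by simp
  also have "\<dots> \<le> real k * (real M / real k)"
    using assms(3) by (intro mult_right_mono) auto
  also have "\<dots> = real M" using \<open>k > 0\<close> by simp
  finally show False by simp
qed

lemma inj_on_add_mod: "inj_on (\<lambda>t. (a + t) mod k) {..<(k::nat)}"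
proof -
  have "t = t'" if "t' < k" "t \<le> t'" "(a + t) mod k = (a + t') mod k" for t t'
  proof (rule ccontr)
    assume "t \<noteq> t'"
    then have "0 < t' - t" "t' - t < k" using that(1,2) by linarith+
    moreover have "k dvd t' - t"
      using mod_eq_dvd_iff_nat[where m = "a + t'" and n = "a + t" and q = k] that(2,3) by simp
    ultimately show False using nat_dvd_not_less[of "t' - t" k] by blast
  qed
  then show ?thesis by (intro inj_onI) (metis lessThan_iff nat_le_linear)
qed

lemma (in kuhn_simplex) sum_enum: "i \<le> n \<Longrightarrow> (\<Sum>j<n. enum i j) = (\<Sum>j<n. base j) + i"
proof (induction i)
  case 0
  then show ?case by (simp add: enum_0)
next
  case (Suc i)
  then have "upd i < n" by (intro upd_space) simp
  have "enum (Suc i) j = enum i j + (if j = upd i then 1 else 0)" for j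
    using Suc by (simp add: enum_Suc)
  then show ?case using Suc \<open>upd i < n\<close> by (simp add: sum.distrib)
qed

lemma is_allocation_permute:
  assumes "bij_betw \<sigma> {..<k} {..<k}" "is_allocation A k P"
  shows "is_allocation A k (P \<circ> \<sigma>)"
  unfolding is_allocation_def
proof (intro conjI allI impI)
  fix i i' :: nat assume "i < k" "i' < k" "i \<noteq> i'"
  then have "\<sigma> i < k" "\<sigma> i' < k" "\<sigma> i \<noteq> \<sigma> i'"
    using assms(1) by (auto simp: bij_betw_def inj_on_def)
  then show "(P \<circ> \<sigma>) i \<inter> (P \<circ> \<sigma>) i' = {}" using assms(2) by (simp add: is_allocation_def)
next
  have "(\<Union>i<k. P (\<sigma> i)) = (\<Union>i<k. P i)"
    using assms(1) by (metis bij_betw_imp_surj_on image_image)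
  then show "(\<Union>i<k. (P \<circ> \<sigma>) i) = A" using assms(2) by (simp add: is_allocation_def)
qed

lemma is_allocation_image:
  assumes "inj_on h A" "is_allocation A k Q"
  shows "is_allocation (h ` A) k (\<lambda>i. h ` Q i)"
  unfolding is_allocation_def
proof (intro conjI allI impI)
  fix i i' :: nat assume "i < k" "i' < k" "i \<noteq> i'"
  then have "Q i \<subseteq> A" "Q i' \<subseteq> A" "Q i \<inter> Q i' = {}" using assms(2) by (auto simp: is_allocation_def)
  then show "h ` Q i \<inter> h ` Q i' = {}" by (simp add: inj_on_image_Int[OF assms(1), symmetric])
next
  show "(\<Union>i<k. h ` Q i) = h ` A" using assms(2) by (auto simp: is_allocation_def)
qed

lemma democratic_EF2I:
  assumes "\<And>i. i < k \<Longrightarrow> real (n i) / real k \<le> real (card (S i))"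
    and "\<And>i. i < k \<Longrightarrow> S i \<subseteq> {j. j < n i \<and> EF2 (u i j) k P i}"
  shows "democratic_EF2 k n u P"
  unfolding democratic_EF2_def
proof (intro allI impI)
  fix i assume "i < k"
  have "card (S i) \<le> card {j. j < n i \<and> EF2 (u i j) k P i}"
    using assms(2)[OF \<open>i < k\<close>] by (intro card_mono) auto
  then show "real (n i) / real k \<le> real (card {j. j < n i \<and> EF2 (u i j) k P i})"
    using assms(1)[OF \<open>i < k\<close>] by linarith
qed

lemma EF2_image:
  assumes "inj_on h A" "\<And>i'. i' < k \<Longrightarrow> Q i' \<subseteq> A" "EF2 (\<lambda>T. v (h ` T)) k Q i"
  shows "EF2 v k (\<lambda>i. h ` Q i) i"
  unfolding EF2_def
proof (intro allI impI)
  fix i' assume "i' < k"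
  then obtain C where C: "C \<subseteq> Q i'" "card C \<le> 2" "v (h ` (Q i' - C)) \<le> v (h ` Q i)"
    using assms(3) by (auto simp: EF2_def)
  have inj: "inj_on h (Q i')" using assms(1) assms(2)[OF \<open>i' < k\<close>] by (rule inj_on_subset)
  have "h ` C \<subseteq> h ` Q i'" "card (h ` C) \<le> 2" "v (h ` Q i' - h ` C) \<le> v (h ` Q i)"
    using C inj by (auto simp: card_image inj_on_subset inj_on_image_set_diff[OF inj])
  then show "\<exists>C'\<subseteq>h ` Q i'. card C' \<le> 2 \<and> v (h ` Q i' - C') \<le> v (h ` Q i)" by blast
qed

lemma democratic_EF2_image:
  assumes "inj_on h A" "is_allocation A k Q" "democratic_EF2 k n (\<lambda>i j T. u i j (h ` T)) Q"
  shows "democratic_EF2 k n u (\<lambda>i. h ` Q i)"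
proof (rule democratic_EF2I)
  have "Q i' \<subseteq> A" if "i' < k" for i' using assms(2) that by (auto simp: is_allocation_def)
  then show "{j. j < n i \<and> EF2 (\<lambda>T. u i j (h ` T)) k Q i} \<subseteq> {j. j < n i \<and> EF2 (u i j) k (\<lambda>i. h ` Q i) i}"
    for i using EF2_image[OF assms(1)] by blast
qed (use assms(3) in \<open>simp add: democratic_EF2_def\<close>)

lemma democratic_EF2_empty_allocation: "democratic_EF2 k n u (\<lambda>_. {})"
proof (rule democratic_EF2I)
  show "real (n i) / real k \<le> real (card {..<n i})" for i
    by (cases "k = 0") (simp_all add: divide_le_eq mult_le_cancel_left1)
  show "{..<n i} \<subseteq> {j. j < n i \<and> EF2 (u i j) k (\<lambda>_. {}) i}" for i
    by (auto simp: EF2_def)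
qed

subsection \<open>Cutting the line of goods\<close>

locale goods_line =
  fixes k N :: nat
  assumes k_pos: "0 < k" and N_pos: "0 < N"
begin

definition boundary :: "(nat \<Rightarrow> nat) \<Rightarrow> nat \<Rightarrow> nat" where
  "boundary x j = (if j < k then Max (insert 0 (x ` {..<j})) else 2 * N)"

definition piece :: "(nat \<Rightarrow> nat) \<Rightarrow> nat \<Rightarrow> nat set" where
  "piece x j = {t. t < N \<and> boundary x j \<le> 2 * t \<and> 2 * t + 2 \<le> boundary x (Suc j)}"

text \<open>Unlike the pieces, the blocks of a grid point partition the goods: a good belongs to the
  block in which its left end point lies.\<close>

definition block :: "(nat \<Rightarrow> nat) \<Rightarrow> nat \<Rightarrow> nat set" where
  "block x j = {t. t < N \<and> boundary x j \<le> 2 * t \<and> 2 * t < boundary x (Suc j)}"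

definition nondegenerate :: "(nat \<Rightarrow> nat) \<Rightarrow> nat set" where
  "nondegenerate x = {j. j < k \<and> boundary x j < boundary x (Suc j)}"

lemma boundary_0 [simp]: "boundary x 0 = 0"
  using k_pos by (simp add: boundary_def)

lemma boundary_k [simp]: "boundary x k = 2 * N"
  by (simp add: boundary_def)

lemma boundary_le: "(\<forall>i. x i \<le> 2 * N) \<Longrightarrow> boundary x j \<le> 2 * N"
  by (auto simp: boundary_def)

lemma boundary_mono:
  assumes "\<forall>i. x i \<le> 2 * N" "i \<le> j"
  shows "boundary x i \<le> boundary x j"
proof (cases "j < k")
  case True
  then show ?thesis using assms by (auto simp: boundary_def intro!: Max_mono)
next
  case False
  then show ?thesis using boundary_le[OF assms(1)] by (simp add: boundary_def)
qed

lemma boundary_ge: "i < j \<Longrightarrow> j < k \<Longrightarrow> x i \<le> boundary x j"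
  by (auto simp: boundary_def intro!: Max_ge)

lemma boundary_Suc:
  assumes "Suc j < k"
  shows "boundary x (Suc j) = max (boundary x j) (x j)"
proof -
  have "insert 0 (x ` {..<Suc j}) = insert (x j) (insert 0 (x ` {..<j}))"
    by (auto simp: lessThan_Suc)
  moreover have "Max (insert (x j) (insert 0 (x ` {..<j}))) = max (x j) (Max (insert 0 (x ` {..<j})))"
    by (rule Max_insert) auto
  ultimately show ?thesis using assms by (simp add: boundary_def max.commute)
qed

lemma boundary_shift:
  assumes "\<forall>i. x i \<le> y i \<and> y i \<le> Suc (x i)"
  shows "boundary x j \<le> boundary y j \<and> boundary y j \<le> Suc (boundary x j)"
proof (cases "j < k")
  case True
  have "Max (insert 0 (x ` {..<j})) \<le> Max (insert 0 (y ` {..<j}))"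
    using assms by (intro Max.boundedI) (auto intro: le_trans[OF _ Max_ge])
  moreover have "Max (insert 0 (y ` {..<j})) \<le> Suc (Max (insert 0 (x ` {..<j})))"
    using assms by (intro Max.boundedI) (auto intro: le_trans[OF _ Suc_le_mono[THEN iffD2, OF Max_ge]])
  ultimately show ?thesis using True by (simp add: boundary_def)
qed (simp add: boundary_def)

lemma nondegenerate_nonempty: "nondegenerate x \<noteq> {}"
proof
  assume "nondegenerate x = {}"
  then have decreasing: "boundary x (Suc j) \<le> boundary x j" if "j < k" for j
    using that by (auto simp: nondegenerate_def)
  have "boundary x j = 0" if "j \<le> k" for j
    using that
  proof (induction j)
    case (Suc j)
    then show ?case using decreasing[of j] by simp
  qed simp
  from this[of k] show False using N_pos by simp
qed

lemma finite_nondegenerate: "finite (nondegenerate x)"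
  and card_nondegenerate: "card (nondegenerate x) \<le> k"
proof -
  have "nondegenerate x \<subseteq> {..<k}" by (auto simp: nondegenerate_def)
  then show "finite (nondegenerate x)" "card (nondegenerate x) \<le> k"
    by (auto intro: finite_subset dest: card_mono[rotated])
qed

lemma piece_degenerate: "boundary x (Suc j) \<le> boundary x j \<Longrightarrow> piece x j = {}"
  by (auto simp: piece_def)

lemma piece_subset: "piece x j \<subseteq> {..<N}"
  by (auto simp: piece_def)

lemma is_allocation_block:
  assumes "\<forall>i. x i \<le> 2 * N"
  shows "is_allocation {..<N} k (block x)"
  unfolding is_allocation_def
proof (intro conjI allI impI)
  fix i i' :: nat assume "i \<noteq> i'"
  then have "boundary x (Suc i) \<le> boundary x i' \<or> boundary x (Suc i') \<le> boundary x i"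
    using boundary_mono[OF assms, of "Suc i" i'] boundary_mono[OF assms, of "Suc i'" i] by linarith
  then show "block x i \<inter> block x i' = {}" by (auto simp: block_def)
next
  have "t \<in> (\<Union>j<k. block x j)" if "t < N" for t
  proof -
    define j where "j = (LEAST j. 2 * t < boundary x j)"
    have "2 * t < boundary x j" unfolding j_def by (rule LeastI[of _ k]) (simp add: that)
    moreover have "j \<le> k" unfolding j_def by (rule Least_le) (simp add: that)
    moreover have "j \<noteq> 0" using \<open>2 * t < boundary x j\<close> by (metis boundary_0 not_less0)
    moreover have "\<not> 2 * t < boundary x (j - 1)"
      unfolding j_def by (rule not_less_Least) (use \<open>j \<noteq> 0\<close> j_def in auto)
    ultimately show ?thesis using that by (intro UN_I[of "j - 1"]) (auto simp: block_def)
  qed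
  then show "(\<Union>j<k. block x j) = {..<N}" by (auto simp: block_def)
qed

context
  fixes x y :: "nat \<Rightarrow> nat"
  assumes shift: "\<forall>i. x i \<le> y i \<and> y i \<le> Suc (x i)"
begin

lemma piece_subset_block: "piece y j \<subseteq> block x j"
  using boundary_shift[OF shift, of j] boundary_shift[OF shift, of "Suc j"]
  by (auto simp: piece_def block_def)

text \<open>Since the cuts of \<open>y\<close> exceed those of \<open>x\<close> by at most one, a good of a block of \<open>x\<close> misses the
  piece of \<open>y\<close> only if it starts at the left cut of \<open>x\<close> or ends one past the right cut.\<close>

lemma card_block_diff_piece: "card (block x j - piece y j) \<le> 2"
proof -
  have "block x j - piece y j \<subseteq> {boundary x j div 2, boundary x (Suc j) div 2}"
    using boundary_shift[OF shift, of j] boundary_shift[OF shift, of "Suc j"]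
    by (auto simp: piece_def block_def)
  then have "card (block x j - piece y j) \<le> card {boundary x j div 2, boundary x (Suc j) div 2}"
    by (rule card_mono[rotated]) simp
  also have "\<dots> \<le> 2" by (simp add: card_insert_if)
  finally show ?thesis .
qed

end

end

subsection \<open>Labelling grid points by popular pieces\<close>

locale goods_line_preferences = goods_line +
  fixes n :: "nat \<Rightarrow> nat" and w :: "nat \<Rightarrow> nat \<Rightarrow> nat set \<Rightarrow> real"
  assumes w_mono: "\<And>i a X Y. i < k \<Longrightarrow> a < n i \<Longrightarrow> X \<subseteq> Y \<Longrightarrow> Y \<subseteq> {..<N} \<Longrightarrow> w i a X \<le> w i a Y"
begin

definition owner :: "(nat \<Rightarrow> nat) \<Rightarrow> nat" where
  "owner x = (\<Sum>i<k - 1. x i) mod k"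

definition favourite :: "nat \<Rightarrow> nat \<Rightarrow> (nat \<Rightarrow> nat) \<Rightarrow> nat" where
  "favourite i a x =
     (SOME j. j \<in> nondegenerate x \<and> (\<forall>m<k. w i a (piece x m) \<le> w i a (piece x j)))"

definition supporters :: "(nat \<Rightarrow> nat) \<Rightarrow> nat \<Rightarrow> nat set" where
  "supporters x j = {a. a < n (owner x) \<and> favourite (owner x) a x = j}"

definition label :: "(nat \<Rightarrow> nat) \<Rightarrow> nat" where
  "label x = (SOME j. j \<in> nondegenerate x \<and> real (n (owner x)) / real k \<le> real (card (supporters x j)))"

text \<open>The labelling handed to Kuhn's lemma; it is designed so that its first nonzero position is
  \<open>label x\<close>, and it satisfies the boundary conditions because \<open>label x\<close> is a nondegenerate piece.\<close>

definition sperner :: "(nat \<Rightarrow> nat) \<Rightarrow> nat \<Rightarrow> nat" where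
  "sperner x j = (if label x \<le> j \<and> x j \<noteq> 0 then 1 else 0)"

lemma owner_less: "owner x < k"
  using k_pos by (simp add: owner_def)

lemma favourite_spec:
  assumes "i < k" "a < n i"
  shows "favourite i a x \<in> nondegenerate x \<and>
    (\<forall>m<k. w i a (piece x m) \<le> w i a (piece x (favourite i a x)))"
  unfolding favourite_def
proof (rule someI_ex)
  let ?v = "\<lambda>j. w i a (piece x j)"
  obtain j where j: "j \<in> nondegenerate x" "?v j = Max (?v ` nondegenerate x)"
    using Max_in[of "?v ` nondegenerate x"] finite_nondegenerate nondegenerate_nonempty by fastforce
  have "?v m \<le> ?v j" if "m < k" for m
  proof (cases "m \<in> nondegenerate x")
    case True
    then show ?thesis using j finite_nondegenerate by simp
  next
    case False
    then have "piece x m = {}" using \<open>m < k\<close> by (intro piece_degenerate) (auto simp: nondegenerate_def)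
    then show ?thesis using w_mono[OF assms, of "{}"] piece_subset by simp
  qed
  then show "\<exists>j. j \<in> nondegenerate x \<and> (\<forall>m<k. ?v m \<le> ?v j)" using j(1) by blast
qed

lemma label_spec:
  "label x \<in> nondegenerate x \<and> real (n (owner x)) / real k \<le> real (card (supporters x (label x)))"
  unfolding label_def supporters_def
proof (rule someI_ex)
  have "\<exists>j\<in>nondegenerate x. real (n (owner x)) / real k \<le>
      real (card {a. a < n (owner x) \<and> favourite (owner x) a x = j})"
    using favourite_spec owner_less finite_nondegenerate nondegenerate_nonempty card_nondegenerate
    by (intro exists_large_fibre) auto
  then show "\<exists>j. j \<in> nondegenerate x \<and> real (n (owner x)) / real k \<le>
      real (card {a. a < n (owner x) \<and> favourite (owner x) a x = j})" by blast
qed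

lemma label_less: "label x < k"
  using label_spec[of x] by (simp add: nondegenerate_def)

lemma sperner_top:
  assumes "\<forall>i. x i \<le> 2 * N" "j < k - 1" "x j = 2 * N"
  shows "sperner x j = 1"
proof -
  have "label x \<le> j"
  proof (rule ccontr)
    assume "\<not> label x \<le> j"
    have "Suc j < k" using assms(2) by linarith
    then have "2 * N \<le> boundary x (Suc j)" using boundary_ge[of j "Suc j" x] assms(3) by simp
    also have "\<dots> \<le> boundary x (label x)"
      using boundary_mono[OF assms(1)] \<open>\<not> label x \<le> j\<close> by simp
    finally have "2 * N \<le> boundary x (label x)" .
    moreover have "boundary x (Suc (label x)) \<le> 2 * N" using boundary_le assms(1) by blast
    ultimately show False using label_spec[of x] by (simp add: nondegenerate_def)
  qed
  then show ?thesis using assms N_pos by (simp add: sperner_def)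
qed

lemma reduced_sperner: "reduced (k - 1) (sperner x) = label x"
proof (rule reduced_labelling_unique)
  show "label x \<le> k - 1" using label_less[of x] by linarith
  show "\<forall>i<label x. sperner x i = 0" by (simp add: sperner_def)
  show "label x = k - 1 \<or> sperner x (label x) \<noteq> 0"
  proof (cases "label x < k - 1")
    case True
    then have "x (label x) \<noteq> 0"
      using label_spec[of x] boundary_Suc[of "label x" x] by (auto simp: nondegenerate_def)
    then show ?thesis by (simp add: sperner_def)
  next
    case False
    then show ?thesis using label_less[of x] by linarith
  qed
qed

lemma fully_labelled_simplex:
  obtains base upd s where "kuhn_simplex (2 * N) (k - 1) base upd s" "label ` s = {..<k}"
proof -
  have "odd (card {s. ksimplex (2 * N) (k - 1) s \<and> (reduced (k - 1) \<circ> sperner) ` s = {..k - 1}})"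
    using N_pos sperner_top by (intro kuhn_combinatorial) (auto simp: sperner_def)
  then obtain s where "ksimplex (2 * N) (k - 1) s" "(reduced (k - 1) \<circ> sperner) ` s = {..k - 1}"
    using odd_card_imp_not_empty by force
  moreover have "{..k - 1} = {..<k}" using k_pos by auto
  ultimately show ?thesis
    using that reduced_sperner by (auto elim!: ksimplex.cases simp: image_comp[symmetric])
qed

text \<open>The vertices of an elementary simplex have consecutive coordinate sums, hence distinct owners.\<close>

lemma bij_betw_owner:
  assumes "kuhn_simplex (2 * N) (k - 1) base upd s"
  shows "bij_betw owner s {..<k}"
proof -
  interpret kuhn_simplex "2 * N" "k - 1" base upd s by (rule assms)
  let ?B = "\<Sum>j<k - 1. base j"
  have vertices: "{..k - 1} = {..<k}" using k_pos by auto
  have enum: "bij_betw enum {..<k} s"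
    using inj_enum s_eq vertices by (simp add: bij_betw_def)
  have "(\<lambda>t. (?B + t) mod k) ` {..<k} = {..<k}"
    using k_pos by (intro endo_inj_surj inj_on_add_mod) auto
  then have "bij_betw (\<lambda>t. (?B + t) mod k) {..<k} {..<k}"
    using inj_on_add_mod by (simp add: bij_betw_def)
  moreover have "bij_betw (owner \<circ> enum) {..<k} {..<k} = bij_betw (\<lambda>t. (?B + t) mod k) {..<k} {..<k}"
  proof (rule bij_betw_cong)
    fix t assume "t \<in> {..<k}"
    then have "t \<le> k - 1" by simp
    then show "(owner \<circ> enum) t = (?B + t) mod k" using sum_enum by (simp add: owner_def)
  qed
  ultimately have "bij_betw (owner \<circ> enum) {..<k} {..<k}" by simp
  then show ?thesis using bij_betw_comp_iff[OF enum] by blast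
qed

lemma EF2_of_supporter:
  assumes shift: "\<forall>i. x i \<le> y i \<and> y i \<le> Suc (x i)" and "\<And>g. g < k \<Longrightarrow> \<sigma> g < k"
    and "\<sigma> (owner y) = label y" and "a \<in> supporters y (label y)"
  shows "EF2 (w (owner y) a) k (\<lambda>g. block x (\<sigma> g)) (owner y)"
  unfolding EF2_def
proof (intro allI impI)
  fix i' assume "i' < k"
  let ?m = "\<sigma> i'" and ?v = "w (owner y) a"
  have a: "a < n (owner y)" "favourite (owner y) a y = label y"
    using assms(4) by (auto simp: supporters_def)
  have block_sub: "block x j \<subseteq> {..<N}" for j by (auto simp: block_def)
  have "?v (block x ?m - (block x ?m - piece y ?m)) \<le> ?v (piece y ?m)"
    using piece_subset by (intro w_mono[OF owner_less a(1)]) auto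
  also have "\<dots> \<le> ?v (piece y (label y))"
    using favourite_spec[OF owner_less a(1), of y] a(2) assms(2) \<open>i' < k\<close> by simp
  also have "\<dots> \<le> ?v (block x (\<sigma> (owner y)))"
    using piece_subset_block[OF shift] assms(3) block_sub by (intro w_mono[OF owner_less a(1)]) auto
  finally show "\<exists>C\<subseteq>block x ?m. card C \<le> 2 \<and> ?v (block x ?m - C) \<le> ?v (block x (\<sigma> (owner y)))"
    using card_block_diff_piece[OF shift] by blast
qed

lemma exists_democratic_EF2_allocation:
  "\<exists>Q. is_allocation {..<N} k Q \<and> democratic_EF2 k n w Q"
proof -
  obtain base upd s where ks: "kuhn_simplex (2 * N) (k - 1) base upd s" and labels: "label ` s = {..<k}"
    by (rule fully_labelled_simplex)
  interpret kuhn_simplex "2 * N" "k - 1" base upd s by (rule ks)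
  have owner_bij: "bij_betw owner s {..<k}" by (rule bij_betw_owner[OF ks])
  have "finite s" "card s = k"
    using bij_betw_finite[OF owner_bij] bij_betw_same_card[OF owner_bij] by simp_all
  then have "inj_on label s" using labels by (intro eq_card_imp_inj_on) simp_all
  then have label_bij: "bij_betw label s {..<k}" using labels by (simp add: bij_betw_def)
  define vertex where "vertex = the_inv_into s owner"
  have vertex: "vertex g \<in> s" "owner (vertex g) = g" if "g < k" for g
    using owner_bij that by (auto simp: vertex_def bij_betw_def the_inv_into_into f_the_inv_into_f)
  define \<sigma> where "\<sigma> = label \<circ> vertex"
  have \<sigma>: "bij_betw \<sigma> {..<k} {..<k}"
    unfolding \<sigma>_def vertex_def using bij_betw_the_inv_into[OF owner_bij] label_bij by (rule bij_betw_trans)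
  have shift: "\<forall>i. base i \<le> y i \<and> y i \<le> Suc (base i)" if "y \<in> s" for y
    using that base_le le_Suc_base by blast
  have "is_allocation {..<N} k (block base \<circ> \<sigma>)"
    using \<sigma> is_allocation_block s_le_p[OF base_in_s] by (intro is_allocation_permute) auto
  moreover have "democratic_EF2 k n w (block base \<circ> \<sigma>)"
  proof (rule democratic_EF2I)
    fix g assume "g < k"
    let ?y = "vertex g"
    show "real (n g) / real k \<le> real (card (supporters ?y (label ?y)))"
      using label_spec[of ?y] vertex[OF \<open>g < k\<close>] by simp
    have \<sigma>_less: "\<sigma> h < k" if "h < k" for h using \<sigma> that by (auto simp: bij_betw_def)
    have \<sigma>_owner: "\<sigma> (owner ?y) = label ?y" using vertex[OF \<open>g < k\<close>] by (simp add: \<sigma>_def)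
    have "EF2 (w g a) k (block base \<circ> \<sigma>) g" if "a \<in> supporters ?y (label ?y)" for a
      using EF2_of_supporter[where \<sigma> = \<sigma>, OF shift[OF vertex(1)[OF \<open>g < k\<close>]] \<sigma>_less \<sigma>_owner that]
        vertex[OF \<open>g < k\<close>] by (simp add: comp_def)
    then show "supporters ?y (label ?y) \<subseteq> {a. a < n g \<and> EF2 (w g a) k (block base \<circ> \<sigma>) g}"
      using vertex[OF \<open>g < k\<close>] by (auto simp: supporters_def)
  qed
  ultimately show ?thesis by blast
qed

end

theorem mainTheorem16:
  fixes G :: "'g set" and k :: nat and n :: "nat \<Rightarrow> nat"
    and u :: "nat \<Rightarrow> nat \<Rightarrow> 'g set \<Rightarrow> real"
  assumes "finite G" and "k \<ge> 2"
    and "\<And>i. i < k \<Longrightarrow> n i \<ge> 1"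
    and "\<And>i j X. i < k \<Longrightarrow> j < n i \<Longrightarrow> X \<subseteq> G \<Longrightarrow> u i j X \<ge> 0"
    and "\<And>i j X Y. i < k \<Longrightarrow> j < n i \<Longrightarrow> X \<subseteq> Y \<Longrightarrow> Y \<subseteq> G \<Longrightarrow> u i j X \<le> u i j Y"
  shows "\<exists>P. is_allocation G k P \<and> democratic_EF2 k n u P"
proof (cases "G = {}")
  case True
  then have "is_allocation G k (\<lambda>_. {})" by (simp add: is_allocation_def)
  then show ?thesis using democratic_EF2_empty_allocation by blast
next
  case False
  obtain h where "bij_betw h {..<card G} G"
    using ex_bij_betw_nat_finite[OF assms(1)] by (auto simp: atLeast0LessThan)
  then have inj: "inj_on h {..<card G}" and img: "h ` {..<card G} = G"
    by (auto simp: bij_betw_def)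
  interpret goods_line_preferences k "card G" n "\<lambda>i j T. u i j (h ` T)"
  proof unfold_locales
    show "0 < k" "0 < card G" using assms(1,2) False by (auto simp: card_gt_0_iff)
    show "u i j (h ` X) \<le> u i j (h ` Y)" if "i < k" "j < n i" "X \<subseteq> Y" "Y \<subseteq> {..<card G}" for i j X Y
    proof (rule assms(5)[OF that(1,2)])
      show "h ` X \<subseteq> h ` Y" "h ` Y \<subseteq> G" using that img by auto
    qed
  qed
  obtain Q where Q: "is_allocation {..<card G} k Q" "democratic_EF2 k n (\<lambda>i j T. u i j (h ` T)) Q"
    using exists_democratic_EF2_allocation by blast
  have "is_allocation G k (\<lambda>i. h ` Q i)"
    using is_allocation_image[OF inj Q(1)] img by simp
  moreover have "democratic_EF2 k n u (\<lambda>i. h ` Q i)"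
    by (rule democratic_EF2_image[OF inj Q])
  ultimately show ?thesis by blast
qed

end
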